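(* In a combinatorial auction with a finite set $M$ of heterogeneous items and $n$ bidders whose valuations are additive, there exists a randomized mechanism that is universally obviously strategy-proof and gives a $4$-approximation to the optimal social welfare.
   Context: A valuation $v_i:2^M\to\mathbb{R}_{\ge 0}$ is additive if there are numbers $v_{ij}\ge 0$ ($j\in M$) with $v_i(A)=\sum_{j\in A}v_{ij}$ for all $A\subseteq M$. Each bidder's valuation is private and the domain $V_i$ of possible valuations (here: all additive valuations) is publicly known; utilities are quasi-linear (value of the received bundle minus payment). A feasible allocation assigns disjoint bundles to the bidders. A deterministic mechanism is a rooted tree: each internal node is assigned to one bidder, who at that node sends one of the messages labeling the outgoing edges; each leaf is labeled with a feasible allocation and a payment for each bidder. A behavior $B_i$ of bidder $i$ specifies a message at every node assigned to $i$; a behavior profile $B=(B_1,\dots,B_n)$ determines a root-to-leaf path $\mathrm{Path}(B)$, and $f_i(B),p_i(B)$ denote bidder $i$'s bundle and payment at its leaf. A strategy $\mathcal S_i$ maps each $v_i\in V_i$ to a behavior. $\mathcal S_i$ is obviously dominant if for every $v_i\in V_i$, every node $u$ assigned to $i$, every behaviors $B_{-i}$ of the others and every profile $B'$ such that $u\in\mathrm{Path}(\mathcal S_i(v_i),B_{-i})\cap\mathrm{Path}(B')$ and $B'_i$ sends at $u$ a message different from that of $\mathcal S_i(v_i)$, we have $v_i(f_i(\mathcal S_i(v_i),B_{-i}))-p_i(\mathcal S_i(v_i),B_{-i})\ge v_i(f_i(B'))-p_i(B')$. A deterministic mechanism with strategies is obviously strategy-proof (OSP) if all its strategies are obviously dominant.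 A randomized mechanism is a probability distribution over deterministic mechanisms, each equipped with strategies; it is universally OSP if every deterministic mechanism in its support is OSP. For a valuation profile $v$, its welfare $\mathbb{E}[W(v)]$ is the expected (over the random draw) total value of the allocation reached when all bidders follow their strategies; it gives an $\alpha$-approximation if $\mathrm{OPT}(v)\le\alpha\,\mathbb{E}[W(v)]$ for every profile $v$, where $\mathrm{OPT}(v)$ is the maximum of $\sum_i v_i(T_i)$ over feasible allocations $(T_1,\dots,T_n)$. *)

theory Defs
  imports "HOL-Probability.Probability_Measure" "HOL-Library.Sublist"
begin

text \<open>Bidders are 0,...,n-1; items form a finite set M of type 'm.
  Messages are real numbers (at most continuum many messages are ever useful,
  since strategies map the continuum of valuations to behaviours).
  A deterministic mechanism is a well-founded (possibly infinitely branching) tree: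
  a leaf carries an allocation and payments; an internal node carries the bidder
  it is assigned to, the set of messages labelling its outgoing edges, and the
  subtree reached by each message.\<close>

datatype 'm mtree =
    Leaf "nat \<Rightarrow> 'm set" "nat \<Rightarrow> real"
  | Node nat "real set" "real \<Rightarrow> 'm mtree"

definition feasible_alloc :: "nat \<Rightarrow> 'm set \<Rightarrow> (nat \<Rightarrow> 'm set) \<Rightarrow> bool" where
  "feasible_alloc n M T \<longleftrightarrow>
     (\<forall>i<n. T i \<subseteq> M) \<and> (\<forall>i<n. \<forall>j<n. i \<noteq> j \<longrightarrow> T i \<inter> T j = {})"

definition additive_vals :: "'m set \<Rightarrow> ('m \<Rightarrow> real) set" where
  "additive_vals M = {v. (\<forall>j\<in>M. 0 \<le> v j) \<and> (\<forall>j. j \<notin> M \<longrightarrow> v j = 0)}"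

inductive wf_tree :: "nat \<Rightarrow> 'm set \<Rightarrow> 'm mtree \<Rightarrow> bool" for n M where
  wf_leaf: "feasible_alloc n M a \<Longrightarrow> wf_tree n M (Leaf a p)"
| wf_node: "i < n \<Longrightarrow> S \<noteq> {} \<Longrightarrow> (\<forall>m\<in>S. wf_tree n M (ch m)) \<Longrightarrow> wf_tree n M (Node i S ch)"

text \<open>Nodes are identified by their position: the list of messages from the root.
  at_pos T h u: the subtree of T at position h is u.\<close>
inductive at_pos :: "'m mtree \<Rightarrow> real list \<Rightarrow> 'm mtree \<Rightarrow> bool" where
  pos_root: "at_pos t [] t"
| pos_step: "m \<in> S \<Longrightarrow> at_pos (ch m) h u \<Longrightarrow> at_pos (Node i S ch) (m # h) u"

type_synonym behavior = "real list \<Rightarrow> real"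

definition valid_beh :: "'m mtree \<Rightarrow> nat \<Rightarrow> behavior \<Rightarrow> bool" where
  "valid_beh T i b \<longleftrightarrow> (\<forall>h S ch. at_pos T (h) (Node i S ch) \<longrightarrow> b h \<in> S)"

definition valid_profile :: "nat \<Rightarrow> 'm mtree \<Rightarrow> (nat \<Rightarrow> behavior) \<Rightarrow> bool" where
  "valid_profile n T B \<longleftrightarrow> (\<forall>j<n. valid_beh T j (B j))"

primrec play :: "'m mtree \<Rightarrow> (nat \<Rightarrow> behavior) \<Rightarrow> real list
                  \<Rightarrow> real list \<times> (nat \<Rightarrow> 'm set) \<times> (nat \<Rightarrow> real)" where
  "play (Leaf a p) B h = (h, a, p)"
| "play (Node i S ch) B h = play (ch (B i h)) B (h @ [B i h])"

definition path_of :: "'m mtree \<Rightarrow> (nat \<Rightarrow> behavior) \<Rightarrow> real list" where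
  "path_of T B = fst (play T B [])"

definition alloc_of :: "'m mtree \<Rightarrow> (nat \<Rightarrow> behavior) \<Rightarrow> nat \<Rightarrow> 'm set" where
  "alloc_of T B = fst (snd (play T B []))"

definition pay_of :: "'m mtree \<Rightarrow> (nat \<Rightarrow> behavior) \<Rightarrow> nat \<Rightarrow> real" where
  "pay_of T B = snd (snd (play T B []))"

definition utility :: "('m \<Rightarrow> real) \<Rightarrow> 'm mtree \<Rightarrow> (nat \<Rightarrow> behavior) \<Rightarrow> nat \<Rightarrow> real" where
  "utility v T B i = sum v (alloc_of T B i) - pay_of T B i"

type_synonym 'm strategies = "nat \<Rightarrow> ('m \<Rightarrow> real) \<Rightarrow> behavior"

definition obviously_dominant ::
    "nat \<Rightarrow> 'm set \<Rightarrow> 'm mtree \<Rightarrow> nat \<Rightarrow> (('m \<Rightarrow> real) \<Rightarrow> behavior) \<Rightarrow> bool" where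
  "obviously_dominant n M T i Si \<longleftrightarrow>
     (\<forall>v\<in>additive_vals M. \<forall>h S ch Bo B'.
        at_pos T h (Node i S ch) \<longrightarrow>
        (\<forall>j<n. j \<noteq> i \<longrightarrow> valid_beh T j (Bo j)) \<longrightarrow>
        valid_profile n T B' \<longrightarrow>
        prefix h (path_of T (Bo(i := Si v))) \<longrightarrow>
        prefix h (path_of T B') \<longrightarrow>
        B' i h \<noteq> Si v h \<longrightarrow>
        utility v T B' i \<le> utility v T (Bo(i := Si v)) i)"

definition osp :: "nat \<Rightarrow> 'm set \<Rightarrow> 'm mtree \<Rightarrow> 'm strategies \<Rightarrow> bool" where
  "osp n M T S \<longleftrightarrow> wf_tree n M T \<and>
     (\<forall>i<n. \<forall>v\<in>additive_vals M. valid_beh T i (S i v)) \<and>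
     (\<forall>i<n. obviously_dominant n M T i (S i))"

definition welfare :: "nat \<Rightarrow> 'm mtree \<Rightarrow> 'm strategies \<Rightarrow> (nat \<Rightarrow> 'm \<Rightarrow> real) \<Rightarrow> real" where
  "welfare n T S v = (\<Sum>i<n. sum (v i) (alloc_of T (\<lambda>i. S i (v i)) i))"

definition OPT :: "nat \<Rightarrow> 'm set \<Rightarrow> (nat \<Rightarrow> 'm \<Rightarrow> real) \<Rightarrow> real" where
  "OPT n M v = Sup {(\<Sum>i<n. sum (v i) (T i)) | T. feasible_alloc n M T}"

end

theory Submission
  imports Defs
begin

(* The bidders are split uniformly at random into reporters and buyers. Every reporter announces
   its value for each item and never receives anything, so announcing the truth is obviously
   dominant. Then each item is offered to the buyers one after another at the highest reported
   value (ties broken in favour of smaller bidder indices), and the first buyer who accepts takes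
   it at that price. A buyer moves only after the price is fixed and the earlier buyers have
   answered, and later buyers cannot take the item from it, so accepting exactly when its own value
   beats the price is obviously dominant. If for some item the highest bidder t is a buyer and the
   second highest bidder is a reporter, which happens for a quarter of all splits, then t is the
   only buyer beating the price and gets the item. Hence the expected welfare is at least a quarter
   of the sum over the items of the highest value, which bounds the optimal welfare. *)

section \<open>Mechanisms in which every node accepts every message\<close>

fun seq_mech :: "(nat \<Rightarrow> nat) \<Rightarrow> (real list \<Rightarrow> nat \<Rightarrow> 'm set) \<Rightarrow> (real list \<Rightarrow> nat \<Rightarrow> real)
    \<Rightarrow> nat \<Rightarrow> real list \<Rightarrow> 'm mtree" where
  "seq_mech owner A P 0 h = Leaf (A h) (P h)"
| "seq_mech owner A P (Suc k) h = Node (owner (length h)) UNIV (\<lambda>x. seq_mech owner A P k (h @ [x]))"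

fun seq_hist :: "(nat \<Rightarrow> nat) \<Rightarrow> (nat \<Rightarrow> behavior) \<Rightarrow> nat \<Rightarrow> real list \<Rightarrow> real list" where
  "seq_hist owner B 0 h = h"
| "seq_hist owner B (Suc k) h = seq_hist owner B k (h @ [B (owner (length h)) h])"

lemma length_seq_hist [simp]: "length (seq_hist owner B k h) = length h + k"
  by (induction k arbitrary: h) auto

lemma prefix_seq_hist: "prefix h (seq_hist owner B k h)"
proof (induction k arbitrary: h)
  case (Suc k)
  show ?case
    using Suc.IH[of "h @ [B (owner (length h)) h]"] by (auto simp: prefix_def)
qed simp

lemma nth_seq_hist:
  "length h \<le> d \<Longrightarrow> d < length h + k \<Longrightarrow>
   seq_hist owner B k h ! d = B (owner d) (take d (seq_hist owner B k h))"
proof (induction k arbitrary: h)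
  case (Suc k)
  define x where "x = B (owner (length h)) h"
  obtain zs where hist: "seq_hist owner B k (h @ [x]) = h @ x # zs"
    using prefix_seq_hist[of "h @ [x]" owner B k] by (auto simp: prefix_def)
  show ?case
  proof (cases "d = length h")
    case True
    then show ?thesis using hist by (simp add: x_def)
  next
    case False
    then show ?thesis using Suc by (simp flip: x_def)
  qed
qed simp

lemma play_seq_mech:
  "play (seq_mech owner A P k h) B h =
     (seq_hist owner B k h, A (seq_hist owner B k h), P (seq_hist owner B k h))"
  by (induction k arbitrary: h) auto

lemma seq_mech_outcome:
  shows "path_of (seq_mech owner A P k []) B = seq_hist owner B k []"
    and "alloc_of (seq_mech owner A P k []) B = A (seq_hist owner B k [])"
    and "pay_of (seq_mech owner A P k []) B = P (seq_hist owner B k [])"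
  using play_seq_mech[of owner A P k "[]" B] by (simp_all add: path_of_def alloc_of_def pay_of_def)

lemma at_pos_seq_mech:
  "at_pos T h u \<Longrightarrow> T = seq_mech owner A P k h0 \<Longrightarrow>
   length h \<le> k \<and> u = seq_mech owner A P (k - length h) (h0 @ h)"
proof (induction arbitrary: k h0 rule: at_pos.induct)
  case (pos_step m S ch h u i)
  then obtain k' where "k = Suc k'" by (cases k) auto
  with pos_step.prems pos_step.IH[of k' "h0 @ [m]"] show ?case by auto
qed simp

lemma at_pos_seq_mech_Node:
  assumes "at_pos (seq_mech owner A P k []) h (Node i S ch)"
  shows "length h < k \<and> i = owner (length h) \<and> S = UNIV"
proof -
  from at_pos_seq_mech[OF assms refl]
  have "length h \<le> k" "Node i S ch = seq_mech owner A P (k - length h) h" by auto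
  then show ?thesis by (cases "k - length h") auto
qed

lemma valid_beh_seq_mech: "valid_beh (seq_mech owner A P k []) i b"
  using at_pos_seq_mech_Node unfolding valid_beh_def by blast

lemma wf_tree_seq_mech:
  assumes "\<And>H. feasible_alloc n M (A H)" and "\<And>d. d < length h + k \<Longrightarrow> owner d < n"
  shows "wf_tree n M (seq_mech owner A P k h)"
  using assms(2)
proof (induction k arbitrary: h)
  case 0
  then show ?case by (simp add: wf_leaf assms(1))
next
  case (Suc k)
  then have "owner (length h) < n" and "wf_tree n M (seq_mech owner A P k (h @ [x]))" for x
    by (simp, intro Suc.IH) (use Suc.prems in auto)
  then show ?case by (simp add: wf_node)
qed

section \<open>Bids ordered lexicographically\<close>

definition lex_less :: "real \<times> int \<Rightarrow> real \<times> int \<Rightarrow> bool" where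
  "lex_less p q \<longleftrightarrow> fst p < fst q \<or> fst p = fst q \<and> snd p < snd q"

definition lex_max :: "real \<times> int \<Rightarrow> real \<times> int \<Rightarrow> real \<times> int" where
  "lex_max p q = (if lex_less q p then p else q)"

lemma lex_less_irrefl: "\<not> lex_less p p"
  by (simp add: lex_less_def)

lemma lex_less_asym: "lex_less p q \<Longrightarrow> \<not> lex_less q p"
  by (auto simp: lex_less_def)

lemma lex_less_not_less_trans: "lex_less p q \<Longrightarrow> \<not> lex_less r q \<Longrightarrow> lex_less p r"
  by (auto simp: lex_less_def)

lemma lex_less_linear: "p \<noteq> q \<Longrightarrow> lex_less p q \<or> lex_less q p"
  by (auto simp: lex_less_def prod_eq_iff)

lemma fold_lex_max:
  "fold lex_max ps p \<in> insert p (set ps) \<and>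
   (\<forall>q\<in>insert p (set ps). \<not> lex_less (fold lex_max ps p) q)"
proof (induction ps arbitrary: p)
  case (Cons q ps)
  from Cons[of "lex_max q p"] show ?case
    unfolding lex_max_def
    by (auto split: if_splits dest: lex_less_not_less_trans lex_less_asym simp: lex_less_irrefl)
qed (simp add: lex_less_irrefl)

lemma ex_lex_maximal:
  fixes A :: "nat set"
  assumes "finite A" "A \<noteq> {}"
  shows "\<exists>t\<in>A. \<forall>i\<in>A. \<not> lex_less (f t) (f i)"
proof -
  obtain a where "a \<in> A" using assms(2) by blast
  let ?q = "fold lex_max (map f (sorted_list_of_set A)) (f a)"
  have "?q \<in> f ` A" and max: "\<forall>i\<in>A. \<not> lex_less ?q (f i)"
    using fold_lex_max[of "map f (sorted_list_of_set A)" "f a"] \<open>a \<in> A\<close> assms(1) by auto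
  then obtain t where "t \<in> A" "?q = f t" by blast
  with max show ?thesis by auto
qed

definition bid_key :: "(nat \<Rightarrow> 'm \<Rightarrow> real) \<Rightarrow> 'm \<Rightarrow> nat \<Rightarrow> real \<times> int" where
  "bid_key v x i = (v i x, - int i)"

lemma bid_key_inj: "bid_key v x a = bid_key v x b \<Longrightarrow> a = b"
  by (simp add: bid_key_def)

definition top_bidder :: "nat \<Rightarrow> (nat \<Rightarrow> 'm \<Rightarrow> real) \<Rightarrow> 'm \<Rightarrow> nat" where
  "top_bidder n v x = (SOME t. t < n \<and> (\<forall>i<n. \<not> lex_less (bid_key v x t) (bid_key v x i)))"

lemma top_bidder_maximal:
  assumes "0 < n"
  shows "top_bidder n v x < n \<and> (\<forall>i<n. \<not> lex_less (bid_key v x (top_bidder n v x)) (bid_key v x i))"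
  unfolding top_bidder_def
  by (rule someI_ex) (use ex_lex_maximal[of "{..<n}" "bid_key v x"] assms in auto)

lemma value_le_top_bidder: "i < n \<Longrightarrow> v i x \<le> v (top_bidder n v x) x"
  using top_bidder_maximal[of n v x] by (force simp: lex_less_def bid_key_def)

section \<open>The mechanism for a fixed split\<close>

lemma mult_add_less_mult:
  fixes a b j m :: nat
  assumes "a < b" "j < m"
  shows "a * m + j < b * m"
proof -
  have "a * m + j < Suc a * m" using assms(2) by simp
  also have "\<dots> \<le> b * m" using assms(1) by (intro mult_le_mono1) simp
  finally show ?thesis .
qed

text \<open>With \<open>m\<close> items \<^term>\<open>xs\<close>, reporters \<^term>\<open>rs\<close> and buyers \<^term>\<open>bs\<close>, message
  \<open>ri * m + j\<close> is the value of item \<open>xs ! j\<close> reported by \<open>rs ! ri\<close>, and message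
  \<open>length rs * m + bi * m + j\<close> is the answer of \<open>bs ! bi\<close> to the offer of \<open>xs ! j\<close>, where
  \<open>1\<close> means acceptance.\<close>

definition split_owner :: "nat list \<Rightarrow> nat list \<Rightarrow> nat \<Rightarrow> nat \<Rightarrow> nat" where
  "split_owner rs bs m d =
     (if d < length rs * m then rs ! (d div m) else bs ! ((d - length rs * m) div m))"

text \<open>The reserve \<open>(0, - n)\<close> is the key of a phantom bidder \<open>n\<close> of value \<open>0\<close>.\<close>

definition price_key :: "nat \<Rightarrow> nat list \<Rightarrow> nat \<Rightarrow> real list \<Rightarrow> nat \<Rightarrow> real \<times> int" where
  "price_key n rs m H j =
     fold lex_max (map (\<lambda>ri. (H ! (ri * m + j), - int (rs ! ri))) [0..<length rs]) (0, - int n)"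

definition first_taker :: "nat list \<Rightarrow> nat \<Rightarrow> real list \<Rightarrow> nat \<Rightarrow> nat \<Rightarrow> bool" where
  "first_taker rs m H bi j \<longleftrightarrow> H ! (length rs * m + bi * m + j) = 1 \<and>
      (\<forall>bi'<bi. H ! (length rs * m + bi' * m + j) \<noteq> 1)"

definition gets_item :: "nat list \<Rightarrow> nat list \<Rightarrow> nat \<Rightarrow> real list \<Rightarrow> nat \<Rightarrow> nat \<Rightarrow> bool" where
  "gets_item rs bs m H i j \<longleftrightarrow> (\<exists>bi<length bs. bs ! bi = i \<and> first_taker rs m H bi j)"

definition split_alloc :: "'m list \<Rightarrow> nat list \<Rightarrow> nat list \<Rightarrow> real list \<Rightarrow> nat \<Rightarrow> 'm set" where
  "split_alloc xs rs bs H i = (\<lambda>j. xs ! j) ` {j. j < length xs \<and> gets_item rs bs (length xs) H i j}"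

definition split_payment :: "nat \<Rightarrow> 'm list \<Rightarrow> nat list \<Rightarrow> nat list \<Rightarrow> real list \<Rightarrow> nat \<Rightarrow> real" where
  "split_payment n xs rs bs H i =
     (\<Sum>j<length xs. if gets_item rs bs (length xs) H i j then fst (price_key n rs (length xs) H j) else 0)"

definition split_strategy :: "nat \<Rightarrow> 'm list \<Rightarrow> nat list \<Rightarrow> nat \<Rightarrow> ('m \<Rightarrow> real) \<Rightarrow> behavior" where
  "split_strategy n xs rs i val h =
     (if length h < length rs * length xs then val (xs ! (length h mod length xs))
      else if lex_less (price_key n rs (length xs) h (length h mod length xs))
                       (val (xs ! (length h mod length xs)), - int i)
      then 1 else 0)"

definition split_mech :: "nat \<Rightarrow> 'm list \<Rightarrow> nat list \<Rightarrow> nat list \<Rightarrow> 'm mtree" where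
  "split_mech n xs rs bs =
     seq_mech (split_owner rs bs (length xs)) (split_alloc xs rs bs) (split_payment n xs rs bs)
       (length rs * length xs + length bs * length xs) []"

definition split_hist :: "'m list \<Rightarrow> nat list \<Rightarrow> nat list \<Rightarrow> (nat \<Rightarrow> behavior) \<Rightarrow> real list" where
  "split_hist xs rs bs B =
     seq_hist (split_owner rs bs (length xs)) B (length rs * length xs + length bs * length xs) []"

lemma split_mech_outcome:
  shows "path_of (split_mech n xs rs bs) B = split_hist xs rs bs B"
    and "alloc_of (split_mech n xs rs bs) B = split_alloc xs rs bs (split_hist xs rs bs B)"
    and "pay_of (split_mech n xs rs bs) B = split_payment n xs rs bs (split_hist xs rs bs B)"
  unfolding split_mech_def split_hist_def seq_mech_outcome by simp_all

lemma price_key_cong: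
  assumes "\<And>d. d < length rs * m \<Longrightarrow> H ! d = H' ! d" and "j < m"
  shows "price_key n rs m H j = price_key n rs m H' j"
  unfolding price_key_def using assms mult_add_less_mult
  by (intro arg_cong2[where f = "fold lex_max"] map_cong) auto

lemma split_owner_report: "ri < length rs \<Longrightarrow> j < m \<Longrightarrow> split_owner rs bs m (ri * m + j) = rs ! ri"
  using mult_add_less_mult by (simp add: split_owner_def)

lemma split_owner_answer: "j < m \<Longrightarrow> split_owner rs bs m (length rs * m + bi * m + j) = bs ! bi"
  by (simp add: split_owner_def)

lemma split_owner_in_reporters: "d < length rs * m \<Longrightarrow> split_owner rs bs m d \<in> set rs"
  by (simp add: split_owner_def less_mult_imp_div_less)

lemma split_owner_lt:
  assumes "set rs \<subseteq> {..<n}" "set bs \<subseteq> {..<n}" "d < length rs * m + length bs * m"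
  shows "split_owner rs bs m d < n"
proof (cases "d < length rs * m")
  case True
  then show ?thesis using split_owner_in_reporters assms(1) by blast
next
  case False
  then have "(d - length rs * m) div m < length bs"
    using assms(3) by (simp add: less_mult_imp_div_less)
  then show ?thesis using False assms(2) nth_mem by (fastforce simp: split_owner_def)
qed

lemma split_owner_eq_buyer:
  assumes "distinct bs" "bi < length bs" "bs ! bi \<notin> set rs"
    and "d < length rs * m + length bs * m" "split_owner rs bs m d = bs ! bi"
  shows "length rs * m + bi * m \<le> d"
proof -
  have d: "\<not> d < length rs * m" using split_owner_in_reporters assms(3,5) by metis
  then have "(d - length rs * m) div m < length bs"
    using assms(4) by (simp add: less_mult_imp_div_less)
  moreover have "bs ! ((d - length rs * m) div m) = bs ! bi"
    using d assms(5) by (simp add: split_owner_def)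
  ultimately have "(d - length rs * m) div m = bi" using assms(1,2) by (simp add: nth_eq_iff_index_eq)
  then show ?thesis using d div_times_less_eq_dividend[of "d - length rs * m" m] by simp
qed

lemma gets_item_slot:
  "distinct bs \<Longrightarrow> bi < length bs \<Longrightarrow> gets_item rs bs m H (bs ! bi) j \<longleftrightarrow> first_taker rs m H bi j"
  unfolding gets_item_def by (auto simp: nth_eq_iff_index_eq)

lemma feasible_split_alloc:
  assumes "distinct xs" "set xs = M" "distinct bs"
  shows "feasible_alloc n M (split_alloc xs rs bs H)"
  unfolding feasible_alloc_def
proof (intro conjI allI impI)
  fix i show "split_alloc xs rs bs H i \<subseteq> M" using assms(2) by (auto simp: split_alloc_def)
next
  fix i i' :: nat assume "i \<noteq> i'"
  have unique: "bi = bi'" if "first_taker rs (length xs) H bi j" "first_taker rs (length xs) H bi' j" for bi bi' j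
    using that unfolding first_taker_def by (metis linorder_neqE_nat)
  show "split_alloc xs rs bs H i \<inter> split_alloc xs rs bs H i' = {}"
  proof (rule equals0I)
    fix x assume "x \<in> split_alloc xs rs bs H i \<inter> split_alloc xs rs bs H i'"
    then obtain j j' where j: "j < length xs" "j' < length xs" "xs ! j = xs ! j'"
      and gets: "gets_item rs bs (length xs) H i j" "gets_item rs bs (length xs) H i' j'"
      unfolding split_alloc_def by auto
    from j have "j = j'" using assms(1) nth_eq_iff_index_eq by blast
    with gets obtain bi bi' where "bs ! bi = i" "bs ! bi' = i'"
      "first_taker rs (length xs) H bi j" "first_taker rs (length xs) H bi' j"
      unfolding gets_item_def by auto
    with unique \<open>i \<noteq> i'\<close> show False by blast
  qed
qed

lemma sum_split_alloc:
  assumes "distinct xs"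
  shows "sum f (split_alloc xs rs bs H i) =
    (\<Sum>j<length xs. if gets_item rs bs (length xs) H i j then f (xs ! j) else 0)"
proof -
  have "inj_on (\<lambda>j. xs ! j) {j. j < length xs \<and> gets_item rs bs (length xs) H i j}"
    using assms by (auto simp: inj_on_def nth_eq_iff_index_eq)
  then have "sum f (split_alloc xs rs bs H i) =
      (\<Sum>j\<in>{j. j < length xs \<and> gets_item rs bs (length xs) H i j}. f (xs ! j))"
    unfolding split_alloc_def by (simp add: sum.reindex)
  also have "\<dots> = (\<Sum>j<length xs. if gets_item rs bs (length xs) H i j then f (xs ! j) else 0)"
    by (simp add: sum.inter_filter[symmetric] lessThan_def conj_commute)
  finally show ?thesis .
qed

definition offer_gain ::
    "nat \<Rightarrow> 'm list \<Rightarrow> nat list \<Rightarrow> nat list \<Rightarrow> ('m \<Rightarrow> real) \<Rightarrow> real list \<Rightarrow> nat \<Rightarrow> nat \<Rightarrow> real" where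
  "offer_gain n xs rs bs val H i j =
     (if gets_item rs bs (length xs) H i j then val (xs ! j) - fst (price_key n rs (length xs) H j) else 0)"

lemma utility_split_mech:
  assumes "distinct xs"
  shows "utility val (split_mech n xs rs bs) B i =
    (\<Sum>j<length xs. offer_gain n xs rs bs val (split_hist xs rs bs B) i j)"
  unfolding utility_def split_mech_outcome sum_split_alloc[OF assms] split_payment_def offer_gain_def
  by (simp add: sum_subtractf[symmetric] if_distrib cong: if_cong)

lemma split_hist_report:
  assumes "ri < length rs" "j < length xs"
    and "B (rs ! ri) = split_strategy n xs rs (rs ! ri) val"
  shows "split_hist xs rs bs B ! (ri * length xs + j) = val (xs ! j)"
proof -
  define m where "m = length xs"
  define d where "d = ri * m + j"
  have "d < length rs * m" using assms mult_add_less_mult unfolding d_def m_def by blast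
  moreover have "d mod m = j" using assms(2) unfolding d_def m_def by simp
  moreover have "split_owner rs bs m d = rs ! ri"
    using split_owner_report assms(1,2) unfolding d_def m_def by blast
  ultimately show ?thesis
    using assms(3) nth_seq_hist[of "[]" d "length rs * m + length bs * m"]
    unfolding split_hist_def m_def[symmetric] d_def[symmetric]
    by (simp add: split_strategy_def m_def[symmetric])
qed

lemma split_hist_answer:
  assumes "bi < length bs" "j < length xs"
    and "B (bs ! bi) = split_strategy n xs rs (bs ! bi) val"
  shows "split_hist xs rs bs B ! (length rs * length xs + bi * length xs + j) =
    (if lex_less (price_key n rs (length xs) (split_hist xs rs bs B) j) (val (xs ! j), - int (bs ! bi))
     then 1 else 0)"
proof -
  define m where "m = length xs"
  define K where "K = length rs * m"
  define H where "H = split_hist xs rs bs B"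
  define d where "d = K + bi * m + j"
  have "d < K + length bs * m" using assms mult_add_less_mult unfolding d_def m_def by simp
  then have Hd: "H ! d = split_strategy n xs rs (bs ! bi) val (take d H)"
    using assms(3) split_owner_answer[OF assms(2)[folded m_def]] nth_seq_hist[of "[]" d]
    unfolding H_def split_hist_def m_def[symmetric] K_def d_def by simp
  have "length (take d H) = d" "K \<le> d" using \<open>d < _\<close>
    unfolding H_def split_hist_def m_def[symmetric] K_def d_def by simp_all
  moreover have "d mod m = j"
  proof -
    have "d = j + (length rs + bi) * m" unfolding d_def K_def by (simp add: algebra_simps)
    then show ?thesis using assms(2) unfolding m_def by simp
  qed
  moreover have "price_key n rs m (take d H) j = price_key n rs m H j"
    using \<open>K \<le> d\<close> assms(2) by (intro price_key_cong) (auto simp: K_def m_def)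
  ultimately show ?thesis
    using Hd unfolding split_strategy_def H_def[symmetric] m_def[symmetric] K_def[symmetric] d_def[symmetric]
    by simp
qed

section \<open>Obvious strategy-proofness\<close>

lemma offer_gain_le_truthful:
  fixes xs :: "'m list" and rs :: "nat list" and j :: nat and H H' :: "real list"
  defines "m \<equiv> length xs"
  defines "pos \<equiv> \<lambda>b. length rs * m + b * m + j"
  assumes "distinct bs" "bi < length bs"
    and price: "price_key n rs m H' j = price_key n rs m H j"
    and before: "\<forall>b<bi. H' ! pos b = H ! pos b"
    and truthful: "H ! pos bi =
      (if lex_less (price_key n rs m H j) (val (xs ! j), - int (bs ! bi)) then 1 else 0)"
  shows "offer_gain n xs rs bs val H' (bs ! bi) j \<le> offer_gain n xs rs bs val H (bs ! bi) j"
proof -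
  define earlier where "earlier = (\<forall>b<bi. H ! pos b \<noteq> 1)"
  have gets: "gets_item rs bs m X (bs ! bi) j \<longleftrightarrow> X ! pos bi = 1 \<and> (\<forall>b<bi. X ! pos b \<noteq> 1)" for X
    using gets_item_slot[OF assms(3,4)] unfolding first_taker_def pos_def by simp
  then have "gets_item rs bs m H (bs ! bi) j \<longleftrightarrow> H ! pos bi = 1 \<and> earlier"
    and "gets_item rs bs m H' (bs ! bi) j \<longleftrightarrow> H' ! pos bi = 1 \<and> earlier"
    using before unfolding earlier_def by simp_all
  note gains = offer_gain_def m_def[symmetric] this price
  show ?thesis
  proof (cases "lex_less (price_key n rs m H j) (val (xs ! j), - int (bs ! bi))")
    case True
    then have "fst (price_key n rs m H j) \<le> val (xs ! j)" by (auto simp: lex_less_def)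
    with True truthful show ?thesis unfolding gains by simp
  next
    case False
    then have "val (xs ! j) \<le> fst (price_key n rs m H j)" by (auto simp: lex_less_def)
    with False truthful show ?thesis unfolding gains by simp
  qed
qed

lemma sum_offer_gain_le_truthful:
  assumes "distinct bs" "bi < length bs"
    and truthful: "B (bs ! bi) = split_strategy n xs rs (bs ! bi) v"
    and early: "length rs * length xs + bi * length xs \<le> L"
    and agree: "\<And>d. d < L \<Longrightarrow> H' ! d = split_hist xs rs bs B ! d"
  shows "(\<Sum>j<length xs. offer_gain n xs rs bs v H' (bs ! bi) j)
    \<le> (\<Sum>j<length xs. offer_gain n xs rs bs v (split_hist xs rs bs B) (bs ! bi) j)"
proof (intro sum_mono offer_gain_le_truthful[OF assms(1,2)])
  fix j assume "j \<in> {..<length xs}"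
  then have j: "j < length xs" by simp
  show "price_key n rs (length xs) H' j = price_key n rs (length xs) (split_hist xs rs bs B) j"
    using agree early j by (intro price_key_cong) auto
  show "\<forall>b<bi. H' ! (length rs * length xs + b * length xs + j)
      = split_hist xs rs bs B ! (length rs * length xs + b * length xs + j)"
  proof (intro allI impI)
    fix b assume "b < bi"
    then have "b * length xs + j < bi * length xs" using mult_add_less_mult j by blast
    with early agree show "H' ! (length rs * length xs + b * length xs + j)
        = split_hist xs rs bs B ! (length rs * length xs + b * length xs + j)"
      by simp
  qed
  show "split_hist xs rs bs B ! (length rs * length xs + bi * length xs + j) =
      (if lex_less (price_key n rs (length xs) (split_hist xs rs bs B) j) (v (xs ! j), - int (bs ! bi))
       then 1 else 0)"
    using split_hist_answer[where B = B and val = v and n = n and rs = rs, OF assms(2) j truthful] .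
qed

lemma obviously_dominant_split_mech:
  assumes dxs: "distinct xs" and dbs: "distinct bs" and disj: "set rs \<inter> set bs = {}"
  shows "obviously_dominant n M (split_mech n xs rs bs) i (split_strategy n xs rs i)"
  unfolding obviously_dominant_def
proof (intro ballI allI impI)
  fix v h S ch Bo B'
  assume at: "at_pos (split_mech n xs rs bs) h (Node i S ch)"
    and pre: "prefix h (path_of (split_mech n xs rs bs) (Bo(i := split_strategy n xs rs i v)))"
    and pre': "prefix h (path_of (split_mech n xs rs bs) B')"
  define H where "H = split_hist xs rs bs (Bo(i := split_strategy n xs rs i v))"
  define H' where "H' = split_hist xs rs bs B'"
  obtain zs zs' where "H = h @ zs" "H' = h @ zs'"
    using pre pre' unfolding split_mech_outcome H_def H'_def prefix_def by blast
  then have agree: "H' ! d = H ! d" if "d < length h" for d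
    using that by (simp add: nth_append)
  have node: "length h < length rs * length xs + length bs * length xs"
    "split_owner rs bs (length xs) (length h) = i"
    using at_pos_seq_mech_Node[OF at[unfolded split_mech_def]] by auto
  have utilities: "utility v (split_mech n xs rs bs) B' i = (\<Sum>j<length xs. offer_gain n xs rs bs v H' i j)"
    "utility v (split_mech n xs rs bs) (Bo(i := split_strategy n xs rs i v)) i
      = (\<Sum>j<length xs. offer_gain n xs rs bs v H i j)"
    unfolding H_def H'_def by (rule utility_split_mech[OF dxs])+
  show "utility v (split_mech n xs rs bs) B' i
      \<le> utility v (split_mech n xs rs bs) (Bo(i := split_strategy n xs rs i v)) i"
  proof (cases "i \<in> set bs")
    case False
    then have "offer_gain n xs rs bs v X i j = 0" for X j
      unfolding offer_gain_def gets_item_def using nth_mem by fastforce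
    then show ?thesis unfolding utilities by simp
  next
    case True
    then obtain bi where bi: "bi < length bs" "bs ! bi = i" by (auto simp: in_set_conv_nth)
    with True disj have "bs ! bi \<notin> set rs" by blast
    then have "length rs * length xs + bi * length xs \<le> length h"
      using split_owner_eq_buyer[OF dbs bi(1) _ node[folded bi(2)]] by blast
    then have "(\<Sum>j<length xs. offer_gain n xs rs bs v H' (bs ! bi) j)
        \<le> (\<Sum>j<length xs. offer_gain n xs rs bs v H (bs ! bi) j)"
      unfolding H_def using agree bi(2)
      by (intro sum_offer_gain_le_truthful[OF dbs bi(1), where L = "length h"]) (simp_all add: H_def)
    then show ?thesis unfolding utilities bi(2) .
  qed
qed

lemma osp_split_mech:
  assumes "distinct xs" "set xs = M" "distinct bs" "set rs \<inter> set bs = {}"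
    and "set rs \<subseteq> {..<n}" "set bs \<subseteq> {..<n}"
  shows "osp n M (split_mech n xs rs bs) (split_strategy n xs rs)"
  unfolding osp_def
proof (intro conjI allI impI ballI)
  show "wf_tree n M (split_mech n xs rs bs)"
    unfolding split_mech_def
    by (rule wf_tree_seq_mech) (use feasible_split_alloc[OF assms(1-3)] split_owner_lt[OF assms(5,6)] in auto)
next
  fix i v
  show "valid_beh (split_mech n xs rs bs) i (split_strategy n xs rs i v)"
    unfolding split_mech_def by (rule valid_beh_seq_mech)
next
  fix i
  show "obviously_dominant n M (split_mech n xs rs bs) i (split_strategy n xs rs i)"
    using obviously_dominant_split_mech assms(1,3,4) by blast
qed

section \<open>Truthful play\<close>

definition reported_price_key :: "nat \<Rightarrow> (nat \<Rightarrow> 'm \<Rightarrow> real) \<Rightarrow> 'm \<Rightarrow> nat list \<Rightarrow> real \<times> int" where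
  "reported_price_key n v x rs = fold lex_max (map (bid_key v x) rs) (0, - int n)"

lemma price_key_truthful:
  assumes "j < length xs"
  shows "price_key n rs (length xs) (split_hist xs rs bs (\<lambda>i. split_strategy n xs rs i (v i))) j
       = reported_price_key n v (xs ! j) rs"
proof -
  have "split_hist xs rs bs (\<lambda>i. split_strategy n xs rs i (v i)) ! (ri * length xs + j) = v (rs ! ri) (xs ! j)"
    if "ri < length rs" for ri
    using split_hist_report[OF that assms, of "\<lambda>i. split_strategy n xs rs i (v i)" n "v (rs ! ri)"] by simp
  then show ?thesis
    unfolding price_key_def reported_price_key_def
    by (intro arg_cong2[where f = "fold lex_max"] refl nth_equalityI) (simp_all add: bid_key_def)
qed

lemma gets_item_truthful:
  assumes "distinct bs" "j < length xs" "t \<in> set bs"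
    and t: "lex_less (reported_price_key n v (xs ! j) rs) (bid_key v (xs ! j) t)"
    and others: "\<forall>b\<in>set bs. b \<noteq> t \<longrightarrow> lex_less (bid_key v (xs ! j) b) (reported_price_key n v (xs ! j) rs)"
  shows "gets_item rs bs (length xs) (split_hist xs rs bs (\<lambda>i. split_strategy n xs rs i (v i))) t j"
proof -
  define H where "H = split_hist xs rs bs (\<lambda>i. split_strategy n xs rs i (v i))"
  have answer: "H ! (length rs * length xs + bi * length xs + j) =
      (if lex_less (reported_price_key n v (xs ! j) rs) (bid_key v (xs ! j) (bs ! bi)) then 1 else 0)"
    if "bi < length bs" for bi
    using split_hist_answer[OF that assms(2)] price_key_truthful[OF assms(2)]
    unfolding H_def bid_key_def by simp
  obtain bt where bt: "bt < length bs" "bs ! bt = t" using assms(3) by (auto simp: in_set_conv_nth)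
  have "first_taker rs (length xs) H bt j"
    unfolding first_taker_def
  proof (intro conjI allI impI)
    show "H ! (length rs * length xs + bt * length xs + j) = 1"
      using answer[OF bt(1)] bt(2) t by simp
  next
    fix b assume "b < bt"
    then have "b < length bs" "bs ! b \<noteq> t" using bt assms(1) by (auto simp: nth_eq_iff_index_eq)
    then have "lex_less (bid_key v (xs ! j) (bs ! b)) (reported_price_key n v (xs ! j) rs)"
      using others nth_mem by blast
    then show "H ! (length rs * length xs + b * length xs + j) \<noteq> 1"
      using answer[OF \<open>b < length bs\<close>] lex_less_asym by simp
  qed
  then show ?thesis unfolding gets_item_def H_def using bt by auto
qed

definition other_buyers_outbid :: "nat \<Rightarrow> (nat \<Rightarrow> 'm \<Rightarrow> real) \<Rightarrow> 'm \<Rightarrow> nat \<Rightarrow> nat set \<Rightarrow> bool" where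
  "other_buyers_outbid n v x t R \<longleftrightarrow>
     t \<notin> R \<and> (\<forall>b<n. b \<notin> R \<longrightarrow> b \<noteq> t \<longrightarrow> (\<exists>r\<in>R. lex_less (bid_key v x b) (bid_key v x r)))"

lemma top_bidder_gets_item:
  assumes "distinct bs" "set rs \<subseteq> {..<n}" "set bs = {..<n} - set rs" "j < length xs"
    and top: "t < n" "\<forall>i<n. \<not> lex_less (bid_key v (xs ! j) t) (bid_key v (xs ! j) i)"
    and "0 \<le> v t (xs ! j)" and outbid: "other_buyers_outbid n v (xs ! j) t (set rs)"
  shows "gets_item rs bs (length xs) (split_hist xs rs bs (\<lambda>i. split_strategy n xs rs i (v i))) t j"
proof (rule gets_item_truthful[OF assms(1,4)])
  let ?key = "bid_key v (xs ! j)" and ?p = "reported_price_key n v (xs ! j) rs"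
  have p: "?p \<in> insert (0, - int n) (?key ` set rs)"
    and p_max: "\<forall>q\<in>insert (0, - int n) (?key ` set rs). \<not> lex_less ?p q"
    using fold_lex_max[of "map ?key rs" "(0, - int n)"] unfolding reported_price_key_def by auto
  show "t \<in> set bs" using top(1) outbid assms(3) unfolding other_buyers_outbid_def by auto
  show "lex_less ?p (?key t)"
  proof (cases "?p = (0, - int n)")
    case True
    then show ?thesis using assms(7) top(1) by (auto simp: lex_less_def bid_key_def)
  next
    case False
    then obtain r where r: "r \<in> set rs" "?p = ?key r" using p by auto
    then have "r \<noteq> t" "r < n" using outbid assms(2) unfolding other_buyers_outbid_def by auto
    then have "lex_less (?key t) (?key r) \<or> lex_less (?key r) (?key t)"
      by (intro lex_less_linear) (auto dest: bid_key_inj)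
    with r(2) top(2) \<open>r < n\<close> show ?thesis by auto
  qed
  show "\<forall>b\<in>set bs. b \<noteq> t \<longrightarrow> lex_less (?key b) ?p"
  proof (intro ballI impI)
    fix b assume "b \<in> set bs" "b \<noteq> t"
    then obtain r where "r \<in> set rs" "lex_less (?key b) (?key r)"
      using outbid assms(3) unfolding other_buyers_outbid_def by auto
    then show "lex_less (?key b) ?p" using p_max lex_less_not_less_trans by blast
  qed
qed

lemma other_buyers_outbid_by_second:
  assumes "s < n" "s \<noteq> t"
    and second: "\<forall>i<n. i \<noteq> t \<longrightarrow> \<not> lex_less (bid_key v x s) (bid_key v x i)"
    and "R \<subseteq> {..<n} - {s, t}"
  shows "other_buyers_outbid n v x t (insert s R)"
proof -
  have "lex_less (bid_key v x b) (bid_key v x s)" if "b < n" "b \<noteq> s" "b \<noteq> t" for b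
  proof -
    have "lex_less (bid_key v x b) (bid_key v x s) \<or> lex_less (bid_key v x s) (bid_key v x b)"
      using that by (intro lex_less_linear) (auto dest: bid_key_inj)
    then show ?thesis using second that by blast
  qed
  then show ?thesis using assms(2,4) unfolding other_buyers_outbid_def by blast
qed

text \<open>The splits in which \<open>t\<close> is a buyer and the second highest bidder is a reporter
  already make up a quarter of all splits.\<close>

lemma card_other_buyers_outbid:
  assumes t: "t < n" and top: "\<forall>i<n. \<not> lex_less (bid_key v x t) (bid_key v x i)"
  shows "2 ^ n \<le> 4 * card {R \<in> Pow {..<n}. other_buyers_outbid n v x t R}"
proof (cases "n = 1")
  case True
  then have "{} \<in> {R \<in> Pow {..<n}. other_buyers_outbid n v x t R}"
    using t by (auto simp: other_buyers_outbid_def)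
  then have "0 < card {R \<in> Pow {..<n}. other_buyers_outbid n v x t R}"
    by (subst card_gt_0_iff) auto
  then show ?thesis using True by simp
next
  case False
  have "(if t = 0 then 1 else 0) \<in> {..<n} - {t}" using False t by auto
  then obtain s where s: "s < n" "s \<noteq> t" "\<forall>i<n. i \<noteq> t \<longrightarrow> \<not> lex_less (bid_key v x s) (bid_key v x i)"
    using ex_lex_maximal[of "{..<n} - {t}" "bid_key v x"] by blast
  define U where "U = {..<n} - {s, t}"
  have "insert s ` Pow U \<subseteq> {R \<in> Pow {..<n}. other_buyers_outbid n v x t R}"
    using other_buyers_outbid_by_second[OF s] s(1) unfolding U_def by auto
  then have "card (insert s ` Pow U) \<le> card {R \<in> Pow {..<n}. other_buyers_outbid n v x t R}"
    by (intro card_mono) simp_all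
  moreover have "inj_on (insert s) (Pow U)" unfolding U_def inj_on_def by blast
  moreover have "finite U" "card U = n - 2" unfolding U_def using s t by (simp_all add: card_Diff_subset)
  moreover have "(2::nat) ^ n = 4 * 2 ^ (n - 2)"
  proof -
    have "n = (n - 2) + 2" using False t by simp
    then have "(2::nat) ^ n = 2 ^ (n - 2) * 2 ^ 2" by (metis power_add)
    then show ?thesis by simp
  qed
  ultimately show ?thesis by (simp add: card_image card_Pow)
qed

lemma sum_set_distinct_nth: "distinct xs \<Longrightarrow> (\<Sum>x\<in>set xs. f x) = (\<Sum>j<length xs. f (xs ! j))"
  by (simp add: sum.distinct_set_conv_list sum_list_sum_nth atLeast0LessThan)

lemma welfare_split_mech_ge:
  assumes "distinct xs" "distinct bs" "set rs \<subseteq> {..<n}" "set bs = {..<n} - set rs" "0 < n"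
    and nonneg: "\<forall>i<n. \<forall>x\<in>set xs. 0 \<le> v i x"
  shows "(\<Sum>x\<in>set xs. if other_buyers_outbid n v x (top_bidder n v x) (set rs) then v (top_bidder n v x) x else 0)
    \<le> welfare n (split_mech n xs rs bs) (split_strategy n xs rs) v"
proof -
  define H where "H = split_hist xs rs bs (\<lambda>i. split_strategy n xs rs i (v i))"
  define g where "g i j = (if gets_item rs bs (length xs) H i j then v i (xs ! j) else 0)" for i j
  have item: "(if other_buyers_outbid n v (xs ! j) (top_bidder n v (xs ! j)) (set rs)
      then v (top_bidder n v (xs ! j)) (xs ! j) else 0) \<le> (\<Sum>i<n. g i j)" if "j < length xs" for j
  proof -
    let ?t = "top_bidder n v (xs ! j)"
    have top: "?t < n" "\<forall>i<n. \<not> lex_less (bid_key v (xs ! j) ?t) (bid_key v (xs ! j) i)"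
      using top_bidder_maximal[OF assms(5), of v "xs ! j"] by auto
    have g_nonneg: "\<forall>i\<in>{..<n}. 0 \<le> g i j" using nonneg that by (auto simp: g_def)
    then have "g ?t j \<le> (\<Sum>i<n. g i j)" by (intro member_le_sum) (use top in auto)
    moreover have "g ?t j = v ?t (xs ! j)" if "other_buyers_outbid n v (xs ! j) ?t (set rs)"
      using top_bidder_gets_item[OF assms(2-4) \<open>j < length xs\<close> top] top nonneg \<open>j < length xs\<close> that
      unfolding g_def H_def by auto
    ultimately show ?thesis using sum_nonneg[of "{..<n}" "\<lambda>i. g i j"] g_nonneg by auto
  qed
  have "(\<Sum>x\<in>set xs. if other_buyers_outbid n v x (top_bidder n v x) (set rs) then v (top_bidder n v x) x else 0)
      \<le> (\<Sum>j<length xs. \<Sum>i<n. g i j)"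
    unfolding sum_set_distinct_nth[OF assms(1)] by (intro sum_mono) (use item in auto)
  also have "\<dots> = (\<Sum>i<n. \<Sum>j<length xs. g i j)" by (rule sum.swap)
  also have "\<dots> = welfare n (split_mech n xs rs bs) (split_strategy n xs rs) v"
    unfolding welfare_def split_mech_outcome sum_split_alloc[OF assms(1)] H_def g_def ..
  finally show ?thesis .
qed

section \<open>The random split\<close>

definition split_instance :: "nat \<Rightarrow> 'm list \<Rightarrow> nat set \<Rightarrow> 'm mtree \<times> 'm strategies" where
  "split_instance n xs R =
     (split_mech n xs (sorted_list_of_set R) (sorted_list_of_set ({..<n} - R)),
      split_strategy n xs (sorted_list_of_set R))"

definition random_split_mech :: "nat \<Rightarrow> 'm list \<Rightarrow> ('m mtree \<times> 'm strategies) measure" where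
  "random_split_mech n xs =
     distr (uniform_count_measure (Pow {..<n})) (count_space (split_instance n xs ` Pow {..<n}))
       (split_instance n xs)"

lemma measurable_split_instance:
  "split_instance n xs \<in> uniform_count_measure (Pow {..<n}) \<rightarrow>\<^sub>M count_space (split_instance n xs ` Pow {..<n})"
  by (subst measurable_cong_sets[OF sets_uniform_count_measure_count_space refl]) auto

lemma prob_space_random_split_mech: "prob_space (random_split_mech n xs)"
  unfolding random_split_mech_def
  by (rule prob_space.prob_space_distr[OF prob_space_uniform_count_measure measurable_split_instance]) auto

lemma space_random_split_mech: "space (random_split_mech n xs) = split_instance n xs ` Pow {..<n}"
  by (simp add: random_split_mech_def)

lemma borel_measurable_random_split_mech: "f \<in> borel_measurable (random_split_mech n xs)"
proof -
  have "borel_measurable (random_split_mech n xs) = borel_measurable (count_space (split_instance n xs ` Pow {..<n}))"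
    by (rule measurable_cong_sets) (simp_all add: random_split_mech_def)
  then show ?thesis using borel_measurable_count_space by metis
qed

lemma integral_random_split_mech:
  fixes f :: "'m mtree \<times> 'm strategies \<Rightarrow> real"
  shows "(\<integral>x. f x \<partial>random_split_mech n xs) = (\<Sum>R\<in>Pow {..<n}. f (split_instance n xs R)) / 2 ^ n"
  unfolding random_split_mech_def
  by (subst integral_distr[OF measurable_split_instance borel_measurable_count_space])
     (simp add: integral_uniform_count_measure card_Pow)

lemma osp_split_instance:
  assumes "distinct xs" "set xs = M" "R \<subseteq> {..<n}"
  shows "osp n M (fst (split_instance n xs R)) (snd (split_instance n xs R))"
  unfolding split_instance_def fst_conv snd_conv
  using finite_subset[OF assms(3)] assms by (intro osp_split_mech) auto

lemma top_value_le_sum_good_splits: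
  assumes "0 < n" "0 \<le> v (top_bidder n v x) x"
  shows "2 ^ n * v (top_bidder n v x) x
    \<le> 4 * (\<Sum>R\<in>Pow {..<n}. if other_buyers_outbid n v x (top_bidder n v x) R then v (top_bidder n v x) x else 0)"
proof -
  let ?good = "{R \<in> Pow {..<n}. other_buyers_outbid n v x (top_bidder n v x) R}"
  have "2 ^ n \<le> 4 * card ?good"
    using top_bidder_maximal[OF assms(1), of v x] by (intro card_other_buyers_outbid) auto
  then have "real (2 ^ n) \<le> real (4 * card ?good)" by (simp only: of_nat_le_iff)
  then have "2 ^ n * v (top_bidder n v x) x \<le> 4 * card ?good * v (top_bidder n v x) x"
    using assms(2) by (intro mult_right_mono) simp_all
  then show ?thesis by (simp add: sum.inter_filter[symmetric])
qed

lemma sum_top_values_le_welfare: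
  assumes "distinct xs" "0 < n" and nonneg: "\<forall>i<n. \<forall>x\<in>set xs. 0 \<le> v i x"
  shows "2 ^ n * (\<Sum>x\<in>set xs. v (top_bidder n v x) x)
    \<le> 4 * (\<Sum>R\<in>Pow {..<n}. welfare n (fst (split_instance n xs R)) (snd (split_instance n xs R)) v)"
proof -
  let ?t = "top_bidder n v" and ?P = "Pow {..<n}"
  let ?good = "\<lambda>x R. other_buyers_outbid n v x (?t x) R"
  have "2 ^ n * (\<Sum>x\<in>set xs. v (?t x) x) = (\<Sum>x\<in>set xs. 2 ^ n * v (?t x) x)"
    by (simp add: sum_distrib_left)
  also have "\<dots> \<le> (\<Sum>x\<in>set xs. 4 * (\<Sum>R\<in>?P. if ?good x R then v (?t x) x else 0))"
  proof (intro sum_mono top_value_le_sum_good_splits[OF assms(2)])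
    fix x assume "x \<in> set xs"
    then show "0 \<le> v (?t x) x" using nonneg top_bidder_maximal[OF assms(2), of v x] by simp
  qed
  also have "\<dots> = 4 * (\<Sum>x\<in>set xs. \<Sum>R\<in>?P. if ?good x R then v (?t x) x else 0)"
    by (simp add: sum_distrib_left)
  also have "\<dots> = 4 * (\<Sum>R\<in>?P. \<Sum>x\<in>set xs. if ?good x R then v (?t x) x else 0)"
    by (subst sum.swap) (rule refl)
  also have "\<dots> \<le> 4 * (\<Sum>R\<in>?P. welfare n (fst (split_instance n xs R)) (snd (split_instance n xs R)) v)"
  proof (intro mult_left_mono sum_mono)
    fix R assume "R \<in> ?P"
    then have "R \<subseteq> {..<n}" by simp
    then have "finite R" by (rule finite_subset) simp
    then show "(\<Sum>x\<in>set xs. if ?good x R then v (?t x) x else 0)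
        \<le> welfare n (fst (split_instance n xs R)) (snd (split_instance n xs R)) v"
      using welfare_split_mech_ge[OF assms(1) _ _ _ assms(2) nonneg, of "sorted_list_of_set ({..<n} - R)"
          "sorted_list_of_set R"] \<open>R \<subseteq> {..<n}\<close>
      by (simp add: split_instance_def)
  qed simp
  finally show ?thesis .
qed

section \<open>Approximation guarantee\<close>

lemma sum_bidders_item_le:
  assumes "feasible_alloc n M T" and le: "\<And>i. i < n \<Longrightarrow> v i x \<le> c" and "0 \<le> c"
  shows "(\<Sum>i<n. if x \<in> T i then v i x else 0) \<le> c"
proof (cases "\<exists>i0<n. x \<in> T i0")
  case True
  then obtain i0 where i0: "i0 < n" "x \<in> T i0" by blast
  have "x \<notin> T i" if "i < n" "i \<noteq> i0" for i
    using assms(1) i0 that unfolding feasible_alloc_def by blast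
  then have "(\<Sum>i<n. if x \<in> T i then v i x else 0) = (\<Sum>i<n. if i = i0 then v i0 x else 0)"
    using i0 by (intro sum.cong) auto
  also have "\<dots> = v i0 x" using i0 by simp
  finally show ?thesis using le[OF i0(1)] by simp
next
  case False
  then show ?thesis using assms(3) by simp
qed

lemma OPT_le_sum_item_bounds:
  fixes c :: "'m \<Rightarrow> real"
  assumes "finite M" and le: "\<And>i x. i < n \<Longrightarrow> x \<in> M \<Longrightarrow> v i x \<le> c x"
    and nonneg: "\<And>x. x \<in> M \<Longrightarrow> 0 \<le> c x"
  shows "OPT n M v \<le> (\<Sum>x\<in>M. c x)"
  unfolding OPT_def
proof (rule cSup_least)
  show "{\<Sum>i<n. sum (v i) (T i) |T. feasible_alloc n M T} \<noteq> {}"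
    using feasible_alloc_def[of n M "\<lambda>_. {}"] by auto
next
  fix y assume "y \<in> {\<Sum>i<n. sum (v i) (T i) |T. feasible_alloc n M T}"
  then obtain T where T: "feasible_alloc n M T" and y: "y = (\<Sum>i<n. sum (v i) (T i))" by blast
  have "sum (v i) (T i) = (\<Sum>x\<in>M. if x \<in> T i then v i x else 0)" if "i < n" for i
    using T that sum.inter_restrict[OF assms(1), of "v i" "T i"] unfolding feasible_alloc_def
    by (simp add: Int_absorb1)
  then have "y = (\<Sum>i<n. \<Sum>x\<in>M. if x \<in> T i then v i x else 0)"
    unfolding y by simp
  also have "\<dots> = (\<Sum>x\<in>M. \<Sum>i<n. if x \<in> T i then v i x else 0)"
    by (rule sum.swap)
  also have "\<dots> \<le> (\<Sum>x\<in>M. c x)"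
    using le nonneg by (intro sum_mono sum_bidders_item_le[OF T]) auto
  finally show "y \<le> (\<Sum>x\<in>M. c x)" .
qed

lemma OPT_le_four_expected_welfare:
  assumes "set xs = M" "distinct xs" "\<forall>i<n. v i \<in> additive_vals M"
  shows "OPT n M v \<le> 4 * (\<integral>x. welfare n (fst x) (snd x) v \<partial>random_split_mech n xs)"
proof (cases "n = 0")
  case True
  then have "OPT n M v \<le> 0" using OPT_le_sum_item_bounds[of M n v "\<lambda>_. 0"] assms(1) by auto
  then show ?thesis using True by (simp add: integral_random_split_mech welfare_def)
next
  case False
  have nonneg: "\<forall>i<n. \<forall>x\<in>set xs. 0 \<le> v i x" using assms(1,3) by (auto simp: additive_vals_def)
  have "OPT n M v \<le> (\<Sum>x\<in>M. v (top_bidder n v x) x)"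
    using value_le_top_bidder top_bidder_maximal[of n v] False nonneg assms(1)
    by (intro OPT_le_sum_item_bounds) auto
  also have "\<dots> \<le> 4 * (\<Sum>R\<in>Pow {..<n}. welfare n (fst (split_instance n xs R)) (snd (split_instance n xs R)) v) / 2 ^ n"
    using sum_top_values_le_welfare[OF assms(2) _ nonneg] False assms(1)
    by (simp add: pos_le_divide_eq mult.commute)
  finally show ?thesis by (simp add: integral_random_split_mech)
qed

theorem theorem4p1:
  fixes M :: "'m set" and n :: nat
  assumes "finite M"
  shows "\<exists>D :: ('m mtree \<times> 'm strategies) measure.
           prob_space D \<and>
           (\<forall>x\<in>space D. osp n M (fst x) (snd x)) \<and>
           (\<forall>v. (\<forall>i<n. v i \<in> additive_vals M) \<longrightarrow>
                (\<lambda>x. welfare n (fst x) (snd x) v) \<in> borel_measurable D \<and>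
                OPT n M v \<le> 4 * (\<integral>x. welfare n (fst x) (snd x) v \<partial>D))"
proof -
  obtain xs where xs: "set xs = M" "distinct xs" using finite_distinct_list[OF assms] by blast
  have "osp n M (fst x) (snd x)" if "x \<in> space (random_split_mech n xs)" for x
    using that osp_split_instance[OF xs(2,1)] by (auto simp: space_random_split_mech)
  then show ?thesis
    using prob_space_random_split_mech borel_measurable_random_split_mech
      OPT_le_four_expected_welfare[OF xs] by blast
qed

end
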